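(* There exist $(a_1,a_2,a_3,a_4)$ and $(b_1,b_2,b_3,b_4)$ with all $a_j,b_j\in(0,1)$, $\sum_j a_j=\sum_jb_j=1$, and $(b_j)$ not a permutation of $(a_j)$, such that $$\theta(a;0)=\theta(b;0),\quad \theta(a;1)=\theta(b;1),\quad \theta'(a;0)=\theta'(b;0),\quad \theta'(a;1)=\theta'(b;1),$$ where $\theta(x_1,x_2,x_3,x_4;q)=\log(x_1^q+x_2^q+x_3^q+x_4^q)$ and $\theta'$ denotes the derivative with respect to $q$.
   Context: $\theta'(x_1,\dots,x_4;q)=\dfrac{\sum_{i=1}^4x_i^q\log x_i}{\sum_{i=1}^4x_i^q}$. *)

theory Defs
  imports "HOL-Analysis.Analysis"
begin

definition theta :: "real^4 \<Rightarrow> real \<Rightarrow> real" where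
  "theta x q = ln (\<Sum>i\<in>UNIV. (x $ i) powr q)"

text \<open>theta'(x;q) = derivative in q: sum x_i^q log x_i / sum x_i^q.\<close>
definition theta' :: "real^4 \<Rightarrow> real \<Rightarrow> real" where
  "theta' x q = (\<Sum>i\<in>UNIV. (x $ i) powr q * ln (x $ i)) / (\<Sum>i\<in>UNIV. (x $ i) powr q)"

end

theory Submission
  imports Defs
begin

text \<open>
  Look at the probability vectors \<open>(u, u, v, w)\<close> with \<open>v + w = 1 - 2u\<close> and \<open>u\<^sup>2 v w = (3/64)\<^sup>2\<close>,
  defined for \<open>1/8 \<le> u \<le> 3/8\<close>. Since every entry is positive and the entries sum to 1,
  \<open>\<theta>(\<cdot>;0) = ln 4\<close> and \<open>\<theta>(\<cdot>;1) = 0\<close>, and \<open>\<theta>'(\<cdot>;0)\<close> is a quarter of the logarithm of the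
  product of the entries, so these three quantities are constant along the family.
  The remaining one, \<open>\<theta>'(\<cdot>;1) = \<Sum> x\<^sub>i ln x\<^sub>i\<close>, is a continuous function of \<open>u\<close> taking the same
  value at the endpoints, whose vectors \<open>(1/8,1/8,3/8,3/8)\<close> and \<open>(3/8,3/8,1/8,1/8)\<close> are
  permutations of each other. Hence it takes some value at an interior point \<open>u\<^sub>1\<close> and at a
  second point \<open>u\<^sub>2\<close>. For interior \<open>u\<^sub>1\<close> we have \<open>v \<noteq> w\<close>, so \<open>u\<^sub>1\<close> is the only repeated entry,
  and the two vectors cannot be permutations of each other.
\<close>

lemma continuous_on_eq_endpoints_repeats_interior_value:
  fixes f :: "real \<Rightarrow> real"
  assumes cont: "continuous_on {a..b} f" and "a < b" and "f a = f b"
  shows "\<exists>x\<in>{a<..<b}. \<exists>y\<in>{a..b}. x \<noteq> y \<and> f x = f y"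
proof -
  define c where "c = (a + b) / 2"
  have c: "a < c" "c < b" using \<open>a < b\<close> by (simp_all add: c_def)
  show ?thesis
  proof (cases "f c = f a")
    case True
    then show ?thesis using c by (intro bexI[of _ c] bexI[of _ a]) auto
  next
    case False
    \<comment> \<open>both halves of the interval hit the level strictly between \<open>f a = f b\<close> and \<open>f c\<close>\<close>
    define L where "L = (f a + f c) / 2"
    have L_ne: "L \<noteq> f a" "L \<noteq> f c" using False by (auto simp: L_def)
    have L_in: "L \<in> f ` {a..c}" "L \<in> f ` {c..b}"
    proof -
      have L_seg: "L \<in> closed_segment (f a) (f c)"
        by (auto simp: L_def closed_segment_eq_real_ivl)
      have "convex (f ` {a..c})" "convex (f ` {c..b})"
        using continuous_on_subset[OF cont] c
        by (auto simp flip: is_interval_convex_1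
                 simp: is_interval_connected_1 intro!: connected_continuous_image)
      moreover have "f a \<in> f ` {a..c}" "f c \<in> f ` {a..c}" "f c \<in> f ` {c..b}"
        using c by auto
      moreover have "f a \<in> f ` {c..b}"
        using c \<open>f a = f b\<close> by (intro rev_image_eqI[of b]) auto
      ultimately have "closed_segment (f a) (f c) \<subseteq> f ` {a..c}"
        "closed_segment (f a) (f c) \<subseteq> f ` {c..b}"
        by (simp_all add: closed_segment_subset)
      then show "L \<in> f ` {a..c}" "L \<in> f ` {c..b}"
        using L_seg by auto
    qed
    obtain x where x: "x \<in> {a..c}" "f x = L" using L_in(1) by auto
    obtain y where y: "y \<in> {c..b}" "f y = L" using L_in(2) by auto
    have "x \<noteq> a" "x \<noteq> c" using x L_ne by auto
    then show ?thesis using x y c by (intro bexI[of _ x] bexI[of _ y]) auto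
  qed
qed

lemma prod_4: "prod f (UNIV :: 4 set) = f 1 * f 2 * f 3 * f 4"
  unfolding UNIV_4 by (simp add: ac_simps)

lemma theta_zero:
  assumes "\<forall>i. 0 < x $ i"
  shows "theta x 0 = ln 4"
  using assms by (simp add: theta_def less_imp_neq[symmetric])

lemma theta_one:
  assumes "\<forall>i. 0 < x $ i" and "(\<Sum>i\<in>UNIV. x $ i) = 1"
  shows "theta x 1 = 0"
  using assms by (simp add: theta_def less_imp_le)

lemma theta'_zero:
  assumes "\<forall>i. 0 < x $ i"
  shows "theta' x 0 = ln (\<Prod>i\<in>UNIV. x $ i) / 4"
  using assms by (simp add: theta'_def ln_prod less_imp_neq[symmetric])

lemma theta'_one:
  assumes "\<forall>i. 0 < x $ i" and "(\<Sum>i\<in>UNIV. x $ i) = 1"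
  shows "theta' x 1 = (\<Sum>i\<in>UNIV. x $ i * ln (x $ i))"
  using assms by (simp add: theta'_def less_imp_le)

text \<open>
  The pair \<open>(v, w)\<close> consists of the roots of \<open>t\<^sup>2 - (1 - 2u) t + (3/64)\<^sup>2 / u\<^sup>2\<close>; the constant is
  \<open>(1/8 \<cdot> 3/8)\<^sup>2\<close>, which makes the discriminant vanish exactly at \<open>u = 1/8\<close> and \<open>u = 3/8\<close>.
\<close>

definition disc :: "real \<Rightarrow> real" where
  "disc u = (1 - 2*u)^2 - 4 * (3/64)^2 / u^2"

definition root_hi :: "real \<Rightarrow> real" where
  "root_hi u = ((1 - 2*u) + sqrt (disc u)) / 2"

definition root_lo :: "real \<Rightarrow> real" where
  "root_lo u = ((1 - 2*u) - sqrt (disc u)) / 2"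

definition family :: "real \<Rightarrow> real^4" where
  "family u = (\<chi> i. if i = 1 \<or> i = 2 then u else if i = 3 then root_hi u else root_lo u)"

lemma disc_factor:
  assumes "u \<noteq> 0"
  shows "disc u = 2 * (u - 1/8) * (3/8 - u) * (u * (1 - 2*u) + 3/32) / u^2"
  using assms unfolding disc_def by (simp add: field_simps) algebra

lemma disc_nonneg:
  assumes "1/8 \<le> u" "u \<le> 3/8"
  shows "0 \<le> disc u"
proof -
  have "0 < u * (1 - 2*u)" using assms by (intro mult_pos_pos) auto
  then have "0 < u * (1 - 2*u) + 3/32" by linarith
  moreover have "u \<noteq> 0" using assms by auto
  ultimately show ?thesis
    using assms unfolding disc_factor[OF \<open>u \<noteq> 0\<close>]
    by (intro divide_nonneg_pos mult_nonneg_nonneg) simp_all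
qed

lemma disc_pos:
  assumes "1/8 < u" "u < 3/8"
  shows "0 < disc u"
proof -
  have "0 < u * (1 - 2*u)" using assms by (intro mult_pos_pos) auto
  then have "0 < u * (1 - 2*u) + 3/32" by linarith
  moreover have "u \<noteq> 0" using assms by auto
  ultimately show ?thesis
    using assms unfolding disc_factor[OF \<open>u \<noteq> 0\<close>] by (intro divide_pos_pos mult_pos_pos) simp_all
qed

lemma roots:
  assumes "1/8 \<le> u" "u \<le> 3/8"
  shows "0 < root_lo u" "0 < root_hi u" "root_hi u + root_lo u = 1 - 2*u"
    "root_hi u * root_lo u = (3/64)^2 / u^2"
proof -
  have d: "0 \<le> disc u" using disc_nonneg assms by blast
  have "disc u < (1 - 2*u)^2" using assms unfolding disc_def by simp
  then have "sqrt (disc u) < 1 - 2*u"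
    using assms real_sqrt_less_iff[of "disc u" "(1 - 2*u)^2"] by simp
  then show "0 < root_lo u" by (simp add: root_lo_def)
  show "0 < root_hi u"
    unfolding root_hi_def using assms d by (intro divide_pos_pos add_pos_nonneg) simp_all
  show "root_hi u + root_lo u = 1 - 2*u" by (simp add: root_hi_def root_lo_def field_simps)
  have "root_hi u * root_lo u = ((1 - 2*u)^2 - (sqrt (disc u))^2) / 4"
    by (simp add: root_hi_def root_lo_def algebra_simps power2_eq_square)
  also have "\<dots> = (3/64)^2 / u^2" using d by (simp add: disc_def)
  finally show "root_hi u * root_lo u = (3/64)^2 / u^2" .
qed

lemma family_pos: "1/8 \<le> u \<Longrightarrow> u \<le> 3/8 \<Longrightarrow> \<forall>i. 0 < family u $ i"
  using roots(1,2)[of u] by (auto simp: forall_4 family_def)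

lemma family_sum: "1/8 \<le> u \<Longrightarrow> u \<le> 3/8 \<Longrightarrow> (\<Sum>i\<in>UNIV. family u $ i) = 1"
  using roots(3)[of u] by (simp add: sum_4 family_def)

lemma family_less_one: "1/8 \<le> u \<Longrightarrow> u \<le> 3/8 \<Longrightarrow> \<forall>i. family u $ i < 1"
  using family_pos[of u] family_sum[of u] by (auto simp: forall_4 sum_4)

lemma family_prod:
  assumes "1/8 \<le> u" "u \<le> 3/8"
  shows "(\<Prod>i\<in>UNIV. family u $ i) = (3/64)^2"
proof -
  have "(\<Prod>i\<in>UNIV. family u $ i) = u^2 * (root_hi u * root_lo u)"
    by (simp add: prod_4 family_def power2_eq_square)
  also have "\<dots> = (3/64)^2" using assms by (simp add: roots)
  finally show ?thesis .
qed

lemma roots_at_endpoints: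
  "root_hi (1/8) = 3/8" "root_lo (1/8) = 3/8" "root_hi (3/8) = 1/8" "root_lo (3/8) = 1/8"
  by (simp_all add: root_hi_def root_lo_def disc_def power2_eq_square)

lemma family_not_permutation:
  assumes "1/8 < u" "u < 3/8" "u \<noteq> u'"
  shows "\<not> (\<exists>\<sigma>. \<sigma> permutes (UNIV :: 4 set) \<and> (\<forall>j. family u' $ j = family u $ (\<sigma> j)))"
proof
  assume "\<exists>\<sigma>. \<sigma> permutes (UNIV :: 4 set) \<and> (\<forall>j. family u' $ j = family u $ (\<sigma> j))"
  then obtain \<sigma> where \<sigma>: "\<sigma> permutes (UNIV :: 4 set)" "\<forall>j. family u' $ j = family u $ (\<sigma> j)"
    by blast
  \<comment> \<open>\<open>u'\<close> fills two slots of \<open>family u\<close>, which forces \<open>u' = u\<close> because \<open>v \<noteq> w\<close> for interior \<open>u\<close>\<close>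
  have "(1::4) \<noteq> 2" by simp
  then have "\<sigma> 1 \<noteq> \<sigma> 2" using permutes_inj[OF \<sigma>(1)] by (metis inj_eq)
  moreover have "family u $ \<sigma> 1 = u'" "family u $ \<sigma> 2 = u'"
    using \<sigma>(2)[rule_format, of 1] \<sigma>(2)[rule_format, of 2] by (simp_all add: family_def)
  moreover have "root_hi u \<noteq> root_lo u"
    using disc_pos[OF assms(1,2)] by (simp add: root_hi_def root_lo_def)
  ultimately show False
    using exhaust_4[of "\<sigma> 1"] exhaust_4[of "\<sigma> 2"] \<open>u \<noteq> u'\<close> by (auto simp: family_def)
qed

lemma continuous_on_family_entropy:
  "continuous_on {1/8..3/8} (\<lambda>u. \<Sum>i\<in>UNIV. family u $ i * ln (family u $ i))"
proof -
  have "continuous_on {1/8..3/8} root_hi" "continuous_on {1/8..3/8} root_lo"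
    unfolding root_hi_def root_lo_def disc_def by (intro continuous_intros; auto)+
  then show ?thesis
    using roots by (simp add: sum_4 family_def) (intro continuous_intros; force)
qed

theorem theorem10:
  shows "\<exists>a b :: real^4.
     (\<forall>j. 0 < a $ j \<and> a $ j < 1) \<and> (\<forall>j. 0 < b $ j \<and> b $ j < 1) \<and>
     (\<Sum>j\<in>UNIV. a $ j) = 1 \<and> (\<Sum>j\<in>UNIV. b $ j) = 1 \<and>
     \<not> (\<exists>\<sigma>. \<sigma> permutes (UNIV :: 4 set) \<and> (\<forall>j. b $ j = a $ (\<sigma> j))) \<and>
     theta a 0 = theta b 0 \<and> theta a 1 = theta b 1 \<and>
     theta' a 0 = theta' b 0 \<and> theta' a 1 = theta' b 1"
proof -
  define g where "g u = (\<Sum>i\<in>UNIV. family u $ i * ln (family u $ i))" for u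
  have "g (1/8) = g (3/8)" by (simp add: g_def family_def roots_at_endpoints sum_4)
  then obtain u1 u2 where u1: "1/8 < u1" "u1 < 3/8" and u2: "1/8 \<le> u2" "u2 \<le> 3/8"
    and "u1 \<noteq> u2" and "g u1 = g u2"
    using continuous_on_eq_endpoints_repeats_interior_value[of "1/8" "3/8" g]
      continuous_on_family_entropy unfolding g_def by auto
  have u1': "1/8 \<le> u1" "u1 \<le> 3/8" using u1 by auto
  note pos = family_pos[OF u1'] family_pos[OF u2]
  note sum = family_sum[OF u1'] family_sum[OF u2]
  show ?thesis
  proof (rule exI[of _ "family u1"], rule exI[of _ "family u2"], intro conjI)
    show "\<not> (\<exists>\<sigma>. \<sigma> permutes UNIV \<and> (\<forall>j. family u2 $ j = family u1 $ \<sigma> j))"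
      using family_not_permutation u1 \<open>u1 \<noteq> u2\<close> by blast
    show "theta (family u1) 0 = theta (family u2) 0" "theta (family u1) 1 = theta (family u2) 1"
      using pos sum by (simp_all add: theta_zero theta_one)
    show "theta' (family u1) 0 = theta' (family u2) 0"
      using pos by (simp add: theta'_zero family_prod[OF u1'] family_prod[OF u2])
    show "theta' (family u1) 1 = theta' (family u2) 1"
      using pos sum \<open>g u1 = g u2\<close> by (simp add: theta'_one g_def)
  qed (simp_all add: pos sum family_less_one[OF u1'] family_less_one[OF u2])
qed

end
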